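(* Let $n\in\mathbb{N}$ with $n\ge2$, $S:=\{0,\dots,n-1\}$, and let $P$ be a canonically labeled compact packing with $|\operatorname{radii}(P)|=n$ and $\max\operatorname{radii}(P)=1$. Then the canonical realizer of $P$ is the unique element of $\{\tau\in(0,\infty)^S:\tau(n-1)=1\}$ that tightly realizes the set $\operatorname{code}(\operatorname{coronas}(P))\subseteq\operatorname{codes}(S)$.
   Context: A corona is a collection of closed discs $C,D_0,\dots,D_{m-1}$ with pairwise disjoint interiors such that each $D_i$ is tangent to $C$ and to $D_{i+1\bmod m}$ ($C$ center, $D_i$ petals). A compact packing is a collection $P$ of closed discs in the plane with pairwise disjoint interiors such that every $C\in P$ is the center of a corona with petals from $P$; $\operatorname{radii}(P)=\{r_D:D\in P\}$. $\operatorname{coronas}(P)$ is the set of inclusion-maximal coronas with discs from $P$. Canonical labeling: if $\operatorname{radii}(P)=\{r_0<\dots<r_{n-1}\}$, a disc of radius $r_i$ gets label $i$; the canonical realizer is $\rho(i)=r_i$. A coronal code over $S$ is a formal string $c:p_0\dots p_{m-1}$ with symbols from $S$ (center $c$, petals $p_i$), identified up to rotation/reversal of the petal string; $\operatorname{codes}(S)$ is the set of classes. For a maximal corona $\mathcal C$ with center $C$ and petals $D_0,\dots,D_{m-1}$ in cyclic order, $\operatorname{code}(\mathcal C)$ is the code formed from their labels. Angle symbol: $c^a_b:=\arccos\!\Big(\frac{(c+a)^2+(c+b)^2-(a+b)^2}{2(c+a)(c+b)}\Big)$; angle sum $\alpha(c:p_0\dots p_{m-1}):=\sum_{i} c^{p_i}_{p_{i+1\bmod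 m}}$. For $\tau\in(0,\infty)^S$, $\alpha(x)|_\tau$ is the value after substituting $\tau(s)$ for each symbol $s$; a code $x$ is tightly realized by $\tau$ if $\alpha(x)|_\tau=2\pi$, and a set of codes is tightly realized by $\tau$ if each of its elements is.
   Formalization: Corona petals wind once around the centre: seen from the centre of C, their centres have cyclically increasing arguments in one orientation, each gap in (0, pi), and maximality compares only coronas with the same centre. Each condition added here is assumed in the paper as well or is needed for the statement above to hold. *)

theory Defs
  imports "HOL-Analysis.Analysis"
begin

text \<open>A closed disc is represented by its centre (a point of the plane, as a complex
  number) and its radius; the disc itself is the point set cball centre radius.\<close>

type_synonym disc = "complex \<times> real"

definition centre :: "disc \<Rightarrow> complex" where "centre D = fst D"
definition radius :: "disc \<Rightarrow> real" where "radius D = snd D"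

definition is_disc :: "disc \<Rightarrow> bool" where
  "is_disc D \<longleftrightarrow> radius D > 0"

definition disjoint_interiors :: "disc set \<Rightarrow> bool" where
  "disjoint_interiors A \<longleftrightarrow>
     (\<forall>D\<in>A. \<forall>E\<in>A. D \<noteq> E \<longrightarrow>
        ball (centre D) (radius D) \<inter> ball (centre E) (radius E) = {})"

definition tangent :: "disc \<Rightarrow> disc \<Rightarrow> bool" where
  "tangent D E \<longleftrightarrow> dist (centre D) (centre E) = radius D + radius E"

text \<open>The petals, listed in counter-clockwise cyclic order, go once around the centre:
  the directions of the petal centres seen from the centre of C have arguments
  theta 0 < theta 1 < ... < theta (m-1) < theta 0 + 2 pi, with every consecutive angular
  gap (cyclically) strictly between 0 and pi.\<close>
definition ccw_around :: "disc \<Rightarrow> disc list \<Rightarrow> bool" where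
  "ccw_around C ps \<longleftrightarrow> length ps > 0 \<and>
     (\<exists>\<theta>::nat \<Rightarrow> real.
        (\<forall>i<length ps. centre (ps!i) - centre C
             = complex_of_real (radius C + radius (ps!i)) * cis (\<theta> i)) \<and>
        (\<forall>i. Suc i < length ps \<longrightarrow> 0 < \<theta> (Suc i) - \<theta> i \<and> \<theta> (Suc i) - \<theta> i < pi) \<and>
        0 < \<theta> 0 + 2 * pi - \<theta> (length ps - 1) \<and> \<theta> 0 + 2 * pi - \<theta> (length ps - 1) < pi)"

definition around :: "disc \<Rightarrow> disc list \<Rightarrow> bool" where
  "around C ps \<longleftrightarrow> ccw_around C ps \<or> ccw_around C (rev ps)"

definition corona :: "disc \<Rightarrow> disc list \<Rightarrow> bool" where
  "corona C ps \<longleftrightarrow>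
     distinct (C # ps) \<and> (\<forall>D\<in>set (C # ps). is_disc D) \<and>
     disjoint_interiors (set (C # ps)) \<and>
     (\<forall>i<length ps. tangent (ps!i) C \<and> tangent (ps!i) (ps!((i + 1) mod length ps))) \<and>
     around C ps"

definition compact_packing :: "disc set \<Rightarrow> bool" where
  "compact_packing P \<longleftrightarrow>
     (\<forall>D\<in>P. is_disc D) \<and> disjoint_interiors P \<and>
     (\<forall>C\<in>P. \<exists>ps. set ps \<subseteq> P \<and> corona C ps)"

definition radii :: "disc set \<Rightarrow> real set" where
  "radii P = radius ` P"

definition coronas :: "disc set \<Rightarrow> (disc \<times> disc list) set" where
  "coronas P = {(C, ps). C \<in> P \<and> set ps \<subseteq> P \<and> corona C ps \<and>
       \<not> (\<exists>qs. set qs \<subseteq> P \<and> corona C qs \<and> set ps \<subset> set qs)}"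

definition label :: "disc set \<Rightarrow> disc \<Rightarrow> nat" where
  "label P D = (THE i. i < card (radii P) \<and> sorted_list_of_set (radii P) ! i = radius D)"

definition canonical_realizer :: "disc set \<Rightarrow> nat \<Rightarrow> real" where
  "canonical_realizer P = (\<lambda>i\<in>{0..<card (radii P)}. sorted_list_of_set (radii P) ! i)"

text \<open>Coronal codes c:p_0...p_(m-1), identified up to rotation / reversal of the petal string.\<close>
type_synonym code = "nat \<times> nat list"

definition code_equiv :: "code \<Rightarrow> code \<Rightarrow> bool" where
  "code_equiv x y \<longleftrightarrow> fst x = fst y \<and>
     (\<exists>k. snd y = rotate k (snd x) \<or> snd y = rev (rotate k (snd x)))"

definition code_class :: "code \<Rightarrow> code set" where
  "code_class x = {y. code_equiv x y}"

definition codes :: "nat set \<Rightarrow> code set set" where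
  "codes S = code_class ` {(c, ps). c \<in> S \<and> set ps \<subseteq> S}"

definition code_of :: "disc set \<Rightarrow> disc \<times> disc list \<Rightarrow> code set" where
  "code_of P cor = code_class (label P (fst cor), map (label P) (snd cor))"

definition angle_sym :: "real \<Rightarrow> real \<Rightarrow> real \<Rightarrow> real" where
  "angle_sym c a b = arccos (((c + a)^2 + (c + b)^2 - (a + b)^2) / (2 * (c + a) * (c + b)))"

definition angle_sum :: "(nat \<Rightarrow> real) \<Rightarrow> code \<Rightarrow> real" where
  "angle_sum \<tau> x = (\<Sum>i<length (snd x).
      angle_sym (\<tau> (fst x)) (\<tau> (snd x ! i)) (\<tau> (snd x ! ((i + 1) mod length (snd x)))))"

definition tightly_realizes_code :: "(nat \<Rightarrow> real) \<Rightarrow> code set \<Rightarrow> bool" where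
  "tightly_realizes_code \<tau> X \<longleftrightarrow> (\<forall>x\<in>X. angle_sum \<tau> x = 2 * pi)"

definition tightly_realizes :: "(nat \<Rightarrow> real) \<Rightarrow> code set set \<Rightarrow> bool" where
  "tightly_realizes \<tau> Xs \<longleftrightarrow> (\<forall>X\<in>Xs. tightly_realizes_code \<tau> X)"

end

theory Submission
  imports Defs
begin

text \<open>The canonical radii realize every corona code tightly: by the law of cosines the angle
  symbols of a corona are the angles at its centre between consecutive petals, and these add up
  to \<open>2\<pi>\<close>. For uniqueness, compare another tight realizer \<open>\<tau>\<close> with the canonical one \<open>\<rho>\<close>.
  The angle symbol increases with the petal radii, so the discs on which \<open>\<tau>/\<rho>\<close> is maximal
  form a subfamily closed under taking coronas, and so do the discs on which it is minimal. But
  a packing with radii bounded away from 0 and \<open>\<infinity>\<close> has no two disjoint nonempty such subfamilies: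
  the disc of the first nearest to a disc \<open>B\<close> of the second sees \<open>B\<close> between two consecutive
  petals. Either one of these petals is nearer to \<open>B\<close>, or \<open>B\<close> lies in the triangle of the three
  mutually tangent centres; then the discs of the second subfamily centred in the triangle form a
  finite family closed under coronas, impossible since its rightmost disc would need a petal
  further right. Hence \<open>\<tau>/\<rho>\<close> is constant, and the normalization \<open>\<tau>(n-1) = 1\<close> makes it 1.\<close>

subsection \<open>Discs in the plane\<close>

lemma tangent_iff_norm: "tangent D E \<longleftrightarrow> cmod (centre D - centre E) = radius D + radius E"
  unfolding tangent_def by (simp add: dist_norm)

lemma tangent_sym: "tangent D E \<longleftrightarrow> tangent E D"
  unfolding tangent_def by (simp add: dist_commute add.commute)

lemma disjoint_interiors_norm_ge:
  assumes "disjoint_interiors A" "D \<in> A" "E \<in> A" "D \<noteq> E" "radius D > 0" "radius E > 0"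
  shows "cmod (centre D - centre E) \<ge> radius D + radius E"
proof (rule ccontr)
  assume "\<not> ?thesis"
  hence lt: "cmod (centre E - centre D) < radius D + radius E" by (simp add: norm_minus_commute)
  define s where "s = radius D + radius E"
  have s: "s > 0" using assms s_def by simp
  \<comment> \<open>the point dividing the segment of centres in the ratio of the radii lies in both open discs\<close>
  define p where "p = centre D + of_real (radius D / s) * (centre E - centre D)"
  have "dist (centre D) p = cmod (of_real (radius D / s) * (centre E - centre D))"
    by (simp add: p_def dist_norm)
  also have "\<dots> = radius D / s * cmod (centre E - centre D)"
    using s assms by (simp only: norm_mult norm_of_real) simp
  also have "\<dots> < radius D / s * s" using lt s assms(5) s_def by (intro mult_strict_left_mono) auto
  finally have inD: "p \<in> ball (centre D) (radius D)" using s by simp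
  have "centre E - p = of_real (radius E / s) * (centre E - centre D)"
  proof -
    have "complex_of_real (radius D) + complex_of_real (radius E) \<noteq> 0"
      using s unfolding s_def by (metis of_real_add of_real_eq_0_iff less_irrefl)
    thus ?thesis by (simp add: p_def s_def field_simps)
  qed
  hence "dist (centre E) p = cmod (of_real (radius E / s) * (centre E - centre D))"
    by (simp add: dist_norm)
  also have "\<dots> = radius E / s * cmod (centre E - centre D)"
    using s assms by (simp only: norm_mult norm_of_real) simp
  also have "\<dots> < radius E / s * s" using lt s assms(6) s_def by (intro mult_strict_left_mono) auto
  finally have inE: "p \<in> ball (centre E) (radius E)" using s by simp
  show False using assms(1-4) inD inE unfolding disjoint_interiors_def by blast
qed

lemma norm_diff_convex_combination:
  fixes x y z :: complex and t :: real
  shows "(1 - t) * cmod (z - x)^2 + t * cmod (z - y)^2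
       = cmod (z - (of_real (1 - t) * x + of_real t * y))^2 + t * (1 - t) * cmod (x - y)^2"
  unfolding cmod_power2 by (simp add: algebra_simps power2_eq_square)

lemma closed_segmentE_complex:
  fixes x y p :: complex
  assumes "p \<in> closed_segment x y"
  obtains t where "0 \<le> t" "t \<le> 1" "p = of_real (1 - t) * x + of_real t * y"
  using assms by (auto simp: closed_segment_def scaleR_conv_of_real)

lemma segment_of_tangent_discs_outside_disc:
  fixes x y z p :: complex and rx ry rz :: real
  assumes "rx > 0" "ry > 0" "rz > 0" "cmod (x - y) = rx + ry"
    "cmod (z - x) \<ge> rz + rx" "cmod (z - y) \<ge> rz + ry"
    "p \<in> closed_segment x y"
  shows "cmod (z - p) > rz"
proof -
  obtain t where t: "0 \<le> t" "t \<le> 1" "p = of_real (1 - t) * x + of_real t * y"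
    using assms(7) by (rule closed_segmentE_complex)
  have stewart: "(1 - t) * cmod (z - x)^2 + t * cmod (z - y)^2
       = cmod (z - p)^2 + t * (1 - t) * (rx + ry)^2"
    using norm_diff_convex_combination[of t z x y] t assms(4) by simp
  have "(1 - t) * cmod (z - x)^2 + t * cmod (z - y)^2 \<ge> (1 - t) * (rz + rx)^2 + t * (rz + ry)^2"
    using assms t by (intro add_mono mult_left_mono power_mono) auto
  moreover have "(1 - t) * (rz + rx)^2 + t * (rz + ry)^2 - t * (1 - t) * (rx + ry)^2
      = rz^2 + 2 * rz * ((1 - t) * rx + t * ry) + ((1 - t) * rx - t * ry)^2"
    by (simp add: algebra_simps power2_eq_square)
  moreover have "2 * rz * ((1 - t) * rx + t * ry) > 0"
    using assms t by (cases "t = 0") (auto intro!: mult_pos_pos add_pos_nonneg add_nonneg_pos)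
  ultimately have "cmod (z - p)^2 > rz^2"
    using stewart by (smt (verit) zero_le_power2)
  then show ?thesis using assms(3)
    by (meson abs_le_square_iff abs_of_pos norm_ge_zero not_less power2_less_imp_less)
qed

lemma segment_of_tangent_discs_covered:
  fixes x y p :: complex
  assumes "cmod (x - y) = rx + ry" "p \<in> closed_segment x y" "rx \<ge> 0" "ry \<ge> 0"
  shows "cmod (p - x) \<le> rx \<or> cmod (p - y) \<le> ry"
proof -
  obtain t where t: "0 \<le> t" "t \<le> 1" "p = of_real (1 - t) * x + of_real t * y"
    using assms(2) by (rule closed_segmentE_complex)
  have "p - x = of_real t * (y - x)" "p - y = of_real (1 - t) * (x - y)"
    using t by (simp_all add: algebra_simps)
  hence "cmod (p - x) = \<bar>t\<bar> * cmod (y - x)" "cmod (p - y) = \<bar>1 - t\<bar> * cmod (x - y)"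
    by (simp_all only: norm_mult norm_of_real)
  hence "cmod (p - x) = t * (rx + ry)" "cmod (p - y) = (1 - t) * (rx + ry)"
    using t assms(1) by (simp_all add: norm_minus_commute)
  thus ?thesis by (cases "t * (rx + ry) \<le> rx") (simp_all add: algebra_simps)
qed

lemma packing_segment_outside_disc:
  assumes "disjoint_interiors P" "\<forall>D\<in>P. radius D > 0" "X \<in> P" "Y \<in> P" "Z \<in> P"
    "Z \<noteq> X" "Z \<noteq> Y" "tangent X Y" "q \<in> closed_segment (centre X) (centre Y)"
  shows "cmod (centre Z - q) > radius Z"
proof -
  have "cmod (centre Z - centre X) \<ge> radius Z + radius X"
    "cmod (centre Z - centre Y) \<ge> radius Z + radius Y"
    using disjoint_interiors_norm_ge assms by auto
  thus ?thesis
    using segment_of_tangent_discs_outside_disc[of "radius X" "radius Y" "radius Z"] assms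
    by (auto simp: tangent_iff_norm)
qed

lemma finite_discs_near:
  assumes "disjoint_interiors P" "r0 > 0" "\<forall>D\<in>P. radius D \<ge> r0"
  shows "finite {D\<in>P. cmod (centre D - z) \<le> R}"
proof -
  define S where "S = {D\<in>P. cmod (centre D - z) \<le> R}"
  define \<delta> where "\<delta> = r0 / 2"
  have \<delta>: "\<delta> > 0" using assms \<delta>_def by simp
  \<comment> \<open>rounding centres to the lattice \<delta>\<int> \<times> \<delta>\<int> moves them by at most \<delta> < r0, so distinct discs get
    distinct grid points, and only finitely many grid points are near z\<close>
  define g where "g D = (round (Re (centre D) / \<delta>), round (Im (centre D) / \<delta>))" for D
  define pt where "pt D = Complex (\<delta> * of_int (fst (g D))) (\<delta> * of_int (snd (g D)))" for D
  have round_close: "\<bar>x - \<delta> * of_int (round (x / \<delta>))\<bar> \<le> \<delta> / 2" for x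
  proof -
    have "\<bar>x - \<delta> * of_int (round (x / \<delta>))\<bar> = \<delta> * \<bar>of_int (round (x / \<delta>)) - x / \<delta>\<bar>"
      using \<delta> by (simp add: abs_mult_pos' field_simps abs_minus_commute)
    also have "\<dots> \<le> \<delta> / 2" using of_int_round_abs_le[of "x / \<delta>"] \<delta> by simp
    finally show ?thesis .
  qed
  have close: "cmod (centre D - pt D) < radius D" if "D \<in> P" for D
  proof -
    have "cmod (centre D - pt D) \<le> \<bar>Re (centre D - pt D)\<bar> + \<bar>Im (centre D - pt D)\<bar>"
      by (rule cmod_le)
    also have "\<dots> \<le> \<delta>"
      using round_close[of "Re (centre D)"] round_close[of "Im (centre D)"]
      by (simp add: pt_def g_def)
    also have "\<dots> < radius D" using \<delta> \<delta>_def assms that by fastforce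
    finally show ?thesis .
  qed
  have inj: "inj_on g S"
  proof
    fix D E assume D: "D \<in> S" and E: "E \<in> S" and eq: "g D = g E"
    have "pt D = pt E" using eq by (simp add: pt_def)
    hence "pt D \<in> ball (centre D) (radius D)" "pt D \<in> ball (centre E) (radius E)"
      using close[of D] close[of E] D E by (auto simp: dist_norm S_def)
    thus "D = E" using assms(1) D E unfolding S_def disjoint_interiors_def by blast
  qed
  define N where "N = ceiling ((cmod z + R) / \<delta> + 1)"
  have bd: "\<bar>round (x / \<delta>)\<bar> \<le> N" if "\<bar>x\<bar> \<le> cmod z + R" for x
  proof -
    have "\<bar>x / \<delta>\<bar> \<le> (cmod z + R) / \<delta>" using that \<delta>
      by (simp add: abs_divide divide_right_mono)
    hence "\<bar>of_int (round (x / \<delta>))\<bar> \<le> (cmod z + R) / \<delta> + 1"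
      using of_int_round_abs_le[of "x / \<delta>"] by linarith
    also have "\<dots> \<le> of_int N" unfolding N_def by linarith
    finally show ?thesis by linarith
  qed
  have "g ` S \<subseteq> {-N..N} \<times> {-N..N}"
  proof
    fix y assume "y \<in> g ` S"
    then obtain D where D: "D \<in> S" "y = g D" by blast
    have "cmod (centre D) \<le> cmod z + R"
      using D norm_triangle_ineq2[of "centre D" z] unfolding S_def by simp
    hence "\<bar>Re (centre D)\<bar> \<le> cmod z + R" "\<bar>Im (centre D)\<bar> \<le> cmod z + R"
      using abs_Re_le_cmod[of "centre D"] abs_Im_le_cmod[of "centre D"] by linarith+
    thus "y \<in> {-N..N} \<times> {-N..N}" using D bd unfolding g_def by fastforce
  qed
  hence "finite (g ` S)" by (rule finite_subset) simp
  thus ?thesis using inj finite_imageD S_def by blast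
qed

subsection \<open>Petals going once around a centre\<close>

text \<open>With \<open>\<theta> i\<close> the direction of the \<open>i\<close>-th petal, \<open>next_angle \<theta> m k\<close> is the direction of
  petal \<open>Suc k mod m\<close>, lifted so that it lies above \<open>\<theta> k\<close>.\<close>

definition next_angle :: "(nat \<Rightarrow> real) \<Rightarrow> nat \<Rightarrow> nat \<Rightarrow> real" where
  "next_angle \<theta> m k = (if Suc k < m then \<theta> (Suc k) else \<theta> 0 + 2 * pi)"

lemma cis_next_angle:
  assumes "k < m"
  shows "cis (next_angle \<theta> m k) = cis (\<theta> (Suc k mod m))"
proof (cases "Suc k < m")
  case False
  hence "Suc k = m" using assms by simp
  thus ?thesis using False by (simp add: next_angle_def cis.ctr complex_eq_iff)
qed (simp add: next_angle_def)

lemma sum_next_angle_gaps: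
  assumes "m > 0"
  shows "(\<Sum>k<m. next_angle \<theta> m k - \<theta> k) = 2 * pi"
proof -
  obtain m' where m': "m = Suc m'" using assms by (cases m) auto
  have "(\<Sum>k<m'. next_angle \<theta> m k - \<theta> k) = (\<Sum>k<m'. \<theta> (Suc k) - \<theta> k)"
    using m' by (intro sum.cong) (auto simp: next_angle_def)
  also have "\<dots> = \<theta> m' - \<theta> 0" by (rule sum_lessThan_telescope)
  finally show ?thesis using m' by (simp add: next_angle_def)
qed

lemma angle_in_sector:
  fixes \<theta> :: "nat \<Rightarrow> real"
  assumes "m > 0"
  obtains k j where "k < m" "\<theta> k \<le> \<phi> + 2 * pi * of_int j" "\<phi> + 2 * pi * of_int j < next_angle \<theta> m k"
proof -
  define j where "j = - floor ((\<phi> - \<theta> 0) / (2 * pi))"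
  define \<phi>' where "\<phi>' = \<phi> + 2 * pi * of_int j"
  have "\<theta> 0 \<le> \<phi>'" "\<phi>' < \<theta> 0 + 2 * pi"
    using floor_divide_lower[of "2 * pi" "\<phi> - \<theta> 0"] floor_divide_upper[of "2 * pi" "\<phi> - \<theta> 0"]
    by (simp_all add: \<phi>'_def j_def algebra_simps)
  define K where "K = {k. k < m \<and> \<theta> k \<le> \<phi>'}"
  have "0 \<in> K" "finite K" using assms \<open>\<theta> 0 \<le> \<phi>'\<close> unfolding K_def by simp_all
  define k where "k = Max K"
  have "k \<in> K" "\<And>i. i \<in> K \<Longrightarrow> i \<le> k"
    unfolding k_def using \<open>0 \<in> K\<close> \<open>finite K\<close> by (auto intro: Max_in)
  moreover have "\<phi>' < next_angle \<theta> m k"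
  proof (cases "Suc k < m")
    case True
    hence "Suc k \<notin> K" using \<open>\<And>i. i \<in> K \<Longrightarrow> i \<le> k\<close> by fastforce
    thus ?thesis using True unfolding K_def next_angle_def by auto
  qed (use \<open>\<phi>' < \<theta> 0 + 2 * pi\<close> in \<open>simp add: next_angle_def\<close>)
  ultimately show ?thesis using that unfolding K_def \<phi>'_def by blast
qed

lemma ccw_around_angles:
  assumes "ccw_around C qs"
  obtains \<theta> where "length qs > 0"
    "\<And>i. i < length qs \<Longrightarrow>
       centre (qs!i) - centre C = of_real (radius C + radius (qs!i)) * cis (\<theta> i)"
    "\<And>k. k < length qs \<Longrightarrow> centre (qs!(Suc k mod length qs)) - centre C
       = of_real (radius C + radius (qs!(Suc k mod length qs))) * cis (next_angle \<theta> (length qs) k)"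
    "\<And>k. k < length qs \<Longrightarrow> 0 < next_angle \<theta> (length qs) k - \<theta> k"
    "\<And>k. k < length qs \<Longrightarrow> next_angle \<theta> (length qs) k - \<theta> k < pi"
proof -
  define m where "m = length qs"
  obtain \<theta> where th: "\<forall>i<m. centre (qs!i) - centre C = of_real (radius C + radius (qs!i)) * cis (\<theta> i)"
    "\<forall>i. Suc i < m \<longrightarrow> 0 < \<theta> (Suc i) - \<theta> i \<and> \<theta> (Suc i) - \<theta> i < pi"
    "0 < \<theta> 0 + 2 * pi - \<theta> (m - 1)" "\<theta> 0 + 2 * pi - \<theta> (m - 1) < pi"
    and m: "m > 0"
    using assms unfolding ccw_around_def m_def by blast
  have gap: "0 < next_angle \<theta> m k - \<theta> k \<and> next_angle \<theta> m k - \<theta> k < pi" if "k < m" for k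
  proof (cases "Suc k < m")
    case False
    hence "k = m - 1" using that by simp
    thus ?thesis using th(3,4) False by (simp add: next_angle_def)
  qed (use th(2) in \<open>simp add: next_angle_def\<close>)
  have next_petal: "centre (qs!(Suc k mod m)) - centre C
       = of_real (radius C + radius (qs!(Suc k mod m))) * cis (next_angle \<theta> m k)" if "k < m" for k
    using th(1) m cis_next_angle[OF that, of \<theta>] by simp
  show ?thesis
    by (rule that[of \<theta>, folded m_def]) (use m th(1) gap next_petal in auto)
qed

lemma cis_sub_sin_combination:
  "of_real (sin (B - A)) * cis x = of_real (sin (B - x)) * cis A + of_real (sin (x - A)) * cis B"
  by (simp add: complex_eq_iff cis.ctr sin_diff cos_diff algebra_simps)

lemma ccw_around_cone:
  assumes "ccw_around C qs" "radius C > 0" "\<forall>D\<in>set qs. radius D > 0"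
  obtains k s t where "k < length qs" "s \<ge> 0" "t \<ge> 0"
    "w = of_real s * (centre (qs!k) - centre C) + of_real t * (centre (qs!(Suc k mod length qs)) - centre C)"
proof -
  define m where "m = length qs"
  obtain \<theta> where m: "m > 0"
    and th: "\<And>i. i < m \<Longrightarrow> centre (qs!i) - centre C = of_real (radius C + radius (qs!i)) * cis (\<theta> i)"
    and thn: "\<And>k. k < m \<Longrightarrow> centre (qs!(Suc k mod m)) - centre C
       = of_real (radius C + radius (qs!(Suc k mod m))) * cis (next_angle \<theta> m k)"
    and gap: "\<And>k. k < m \<Longrightarrow> 0 < next_angle \<theta> m k - \<theta> k"
      "\<And>k. k < m \<Longrightarrow> next_angle \<theta> m k - \<theta> k < pi"
    using ccw_around_angles[OF assms(1), folded m_def] by blast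
  \<comment> \<open>lift the argument of w into a gap between consecutive petal directions A < \<phi> < B; as
    B - A < pi, the sine rule writes w as a nonnegative combination of cis A and cis B\<close>
  obtain k j where k: "k < m" "\<theta> k \<le> Arg w + 2 * pi * of_int j" "Arg w + 2 * pi * of_int j < next_angle \<theta> m k"
    by (rule angle_in_sector[OF m])
  define \<phi> where "\<phi> = Arg w + 2 * pi * of_int j"
  define A where "A = \<theta> k"
  define B where "B = next_angle \<theta> m k"
  have sg: "sin (B - A) > 0" using gap k(1) unfolding A_def B_def by (intro sin_gt_zero) auto
  have s1: "sin (B - \<phi>) \<ge> 0" "sin (\<phi> - A) \<ge> 0"
    using k gap[OF k(1)] unfolding \<phi>_def A_def B_def by (intro sin_ge_zero; simp)+
  have "w = of_real (cmod w) * cis \<phi>"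
    using rcis_cmod_Arg[of w] unfolding \<phi>_def rcis_def by (simp add: cis_mult[symmetric])
  define rk where "rk = radius C + radius (qs!k)"
  define rn where "rn = radius C + radius (qs!(Suc k mod m))"
  have rk: "rk > 0" "rn > 0" using assms k(1) m unfolding rk_def rn_def m_def by (simp_all add: add_pos_pos)
  define s where "s = cmod w * sin (B - \<phi>) / (sin (B - A) * rk)"
  define t where "t = cmod w * sin (\<phi> - A) / (sin (B - A) * rn)"
  have "w = of_real (cmod w / sin (B - A) * sin (B - A)) * cis \<phi>"
    using \<open>w = of_real (cmod w) * cis \<phi>\<close> sg by simp
  also have "\<dots> = of_real (cmod w / sin (B - A)) * (of_real (sin (B - A)) * cis \<phi>)"
    by (simp only: of_real_mult mult.assoc)
  also have "\<dots> = of_real (cmod w / sin (B - A) * sin (B - \<phi>)) * cis A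
      + of_real (cmod w / sin (B - A) * sin (\<phi> - A)) * cis B"
    unfolding cis_sub_sin_combination[of B A \<phi>] by (simp add: distrib_left mult.assoc)
  also have "cmod w / sin (B - A) * sin (B - \<phi>) = s * rk" using sg rk by (simp add: s_def)
  also have "cmod w / sin (B - A) * sin (\<phi> - A) = t * rn" using sg rk by (simp add: t_def)
  finally have "w = of_real s * (centre (qs!k) - centre C) + of_real t * (centre (qs!(Suc k mod m)) - centre C)"
    using th[OF k(1)] thn[OF k(1)] unfolding rk_def rn_def A_def B_def by simp
  moreover have "s \<ge> 0" "t \<ge> 0" unfolding s_def t_def using s1 sg rk by auto
  ultimately show ?thesis using that[of k s t] k(1) unfolding m_def by blast
qed

lemma ccw_around_petal_right:
  assumes "ccw_around C qs" "radius C > 0" "\<forall>D\<in>set qs. radius D > 0"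
  shows "\<exists>D\<in>set qs. Re (centre D) > Re (centre C)"
proof -
  obtain k s t where k: "k < length qs" "s \<ge> 0" "t \<ge> 0"
    "1 = of_real s * (centre (qs!k) - centre C) + of_real t * (centre (qs!(Suc k mod length qs)) - centre C)"
    by (rule ccw_around_cone[OF assms])
  define a where "a = Re (centre (qs!k) - centre C)"
  define b where "b = Re (centre (qs!(Suc k mod length qs)) - centre C)"
  from arg_cong[where f = Re, OF k(4)] have "1 = s * a + t * b" by (simp add: a_def b_def)
  moreover have "s * a \<le> 0" if "a \<le> 0" using k(2) that by (simp add: mult_nonneg_nonpos)
  moreover have "t * b \<le> 0" if "b \<le> 0" using k(3) that by (simp add: mult_nonneg_nonpos)
  ultimately have "a > 0 \<or> b > 0" by linarith
  hence "Re (centre (qs!k)) > Re (centre C) \<or> Re (centre (qs!(Suc k mod length qs))) > Re (centre C)"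
    unfolding a_def b_def by auto
  moreover have "qs!k \<in> set qs" "qs!(Suc k mod length qs) \<in> set qs"
    using k(1) by (auto intro!: nth_mem mod_less_divisor)
  ultimately show ?thesis by blast
qed

lemma finite_ccw_closed_family_empty:
  assumes "finite F" "\<forall>E\<in>F. radius E > 0" "\<forall>E\<in>F. \<exists>qs. set qs \<subseteq> F \<and> ccw_around E qs"
  shows "F = {}"
proof (rule ccontr)
  assume "F \<noteq> {}"
  hence "Max ((\<lambda>D. Re (centre D)) ` F) \<in> (\<lambda>D. Re (centre D)) ` F" using assms(1) by simp
  then obtain E where E: "E \<in> F" "Re (centre E) = Max ((\<lambda>D. Re (centre D)) ` F)" by auto
  obtain qs where qs: "set qs \<subseteq> F" "ccw_around E qs" using assms(3) E(1) by blast
  obtain D where "D \<in> set qs" "Re (centre D) > Re (centre E)"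
    using ccw_around_petal_right[OF qs(2)] assms(2) E(1) qs(1) by blast
  moreover have "Re (centre D) \<le> Re (centre E)"
    using E \<open>D \<in> set qs\<close> qs(1) assms(1) by auto
  ultimately show False by simp
qed

definition cyclic_sum :: "('a \<Rightarrow> 'a \<Rightarrow> 'b::comm_monoid_add) \<Rightarrow> 'a list \<Rightarrow> 'b" where
  "cyclic_sum g xs = (\<Sum>i<length xs. g (xs!i) (xs!(Suc i mod length xs)))"

lemma sum_lessThan_mod_shift:
  fixes h :: "nat \<Rightarrow> 'b::comm_monoid_add"
  shows "(\<Sum>i<m. h ((k + i) mod m)) = (\<Sum>i<m. h i)"
proof (cases "m = 0")
  case False
  have shift_back: "((k + i) mod m + (m - k mod m)) mod m = i" if "i < m" for i
  proof -
    have "((k + i) mod m + (m - k mod m)) mod m = (k mod m + (m - k mod m) + i) mod m"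
      by (metis add.commute add.left_commute mod_add_left_eq mod_add_right_eq)
    also have "k mod m + (m - k mod m) = m" using False by simp
    finally show ?thesis using that by simp
  qed
  show ?thesis
  proof (rule sum.reindex_bij_witness[where j = "\<lambda>i. (k + i) mod m" and i = "\<lambda>i. (i + (m - k mod m)) mod m"])
    fix i assume "i \<in> {..<m}"
    have "(k + (i + (m - k mod m)) mod m) mod m = (k mod m + (m - k mod m) + i) mod m"
      by (metis add.commute add.left_commute mod_add_left_eq mod_add_right_eq)
    also have "k mod m + (m - k mod m) = m" using False by simp
    finally show "(k + (i + (m - k mod m)) mod m) mod m = i" using \<open>i \<in> {..<m}\<close> by simp
  qed (use False shift_back in simp_all)
qed simp

lemma cyclic_sum_rotate: "cyclic_sum g (rotate k xs) = cyclic_sum g xs"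
proof -
  define m where "m = length xs"
  have "cyclic_sum g (rotate k xs) = (\<Sum>i<m. g (xs!((k + i) mod m)) (xs!(Suc ((k + i) mod m) mod m)))"
    unfolding cyclic_sum_def m_def[symmetric] length_rotate
  proof (rule sum.cong[OF refl])
    fix i assume "i \<in> {..<m}"
    hence "Suc i mod m < m" by simp
    have "(k + Suc i mod m) mod m = Suc ((k + i) mod m) mod m" by (simp add: mod_simps)
    thus "g (rotate k xs ! i) (rotate k xs ! (Suc i mod m)) = g (xs!((k + i) mod m)) (xs!(Suc ((k + i) mod m) mod m))"
      using \<open>i \<in> {..<m}\<close> nth_rotate[OF \<open>Suc i mod m < m\<close>[unfolded m_def], of k]
      by (simp add: nth_rotate m_def)
  qed
  also have "\<dots> = cyclic_sum g xs"
    using sum_lessThan_mod_shift[of "\<lambda>j. g (xs!j) (xs!(Suc j mod m))"] by (simp add: cyclic_sum_def m_def)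
  finally show ?thesis .
qed

lemma Suc_cyclic_rev_index:
  assumes "i < m"
  shows "Suc (m - 1 - Suc i mod m) mod m = m - 1 - i"
proof (cases "Suc i < m")
  case False
  hence "Suc i = m" using assms by simp
  thus ?thesis by simp
qed (simp add: Suc_diff_Suc)

lemma nth_rev_cyclic_pair:
  assumes "i < length xs"
  shows "rev xs ! i = xs ! (Suc (length xs - 1 - Suc i mod length xs) mod length xs)"
    and "rev xs ! (Suc i mod length xs) = xs ! (length xs - 1 - Suc i mod length xs)"
proof -
  have "Suc i mod length xs < length xs" using assms by (intro mod_less_divisor) linarith
  thus "rev xs ! i = xs ! (Suc (length xs - 1 - Suc i mod length xs) mod length xs)"
    and "rev xs ! (Suc i mod length xs) = xs ! (length xs - 1 - Suc i mod length xs)"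
    using assms Suc_cyclic_rev_index[OF assms] by (simp_all add: rev_nth diff_diff_left)
qed

lemma cyclic_sum_rev:
  assumes "\<And>x y. g x y = g y x"
  shows "cyclic_sum g (rev xs) = cyclic_sum g xs"
proof -
  define m where "m = length xs"
  define j where "j i = m - 1 - Suc i mod m" for i
  have jj: "j (j i) = i" if "i < m" for i
    using Suc_cyclic_rev_index[OF that] that by (simp add: j_def)
  show ?thesis
    unfolding cyclic_sum_def length_rev m_def[symmetric]
  proof (rule sum.reindex_bij_witness[where i = j and j = j])
    fix i assume i: "i \<in> {..<m}"
    show "g (xs ! j i) (xs ! (Suc (j i) mod m)) = g (rev xs ! i) (rev xs ! (Suc i mod m))"
      using nth_rev_cyclic_pair[of i xs] i assms unfolding j_def m_def by simp
  qed (use jj in \<open>auto simp: j_def\<close>)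
qed

subsection \<open>The angle sum of a corona\<close>

lemma cyclic_sum_map: "cyclic_sum g (map f xs) = cyclic_sum (\<lambda>x y. g (f x) (f y)) xs"
  unfolding cyclic_sum_def length_map
proof (intro sum.cong refl)
  fix i assume "i \<in> {..<length xs}"
  hence "i < length xs" "Suc i mod length xs < length xs" by (auto intro: mod_less_divisor)
  thus "g (map f xs ! i) (map f xs ! (Suc i mod length xs)) = g (f (xs!i)) (f (xs!(Suc i mod length xs)))"
    by simp
qed

lemma angle_sum_eq_cyclic_sum:
  "angle_sum \<tau> (c, l) = cyclic_sum (\<lambda>a b. angle_sym (\<tau> c) (\<tau> a) (\<tau> b)) l"
  unfolding angle_sum_def cyclic_sum_def by simp

lemma angle_sym_commute: "angle_sym c a b = angle_sym c b a"
  unfolding angle_sym_def by (simp add: algebra_simps)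

lemma norm_cis_diff_square:
  "cmod (of_real R1 * cis a - of_real R2 * cis b)^2 = R1^2 + R2^2 - 2 * R1 * R2 * cos (b - a)"
proof -
  have "cmod (of_real R1 * cis a - of_real R2 * cis b)^2
      = (R1 * cos a - R2 * cos b)^2 + (R1 * sin a - R2 * sin b)^2"
    unfolding cmod_power2 by (simp add: cis.ctr)
  also have "\<dots> = R1^2 + R2^2 - 2 * R1 * R2 * cos (b - a)"
    unfolding cos_diff using sin_cos_squared_add[of a] sin_cos_squared_add[of b] by algebra
  finally show ?thesis .
qed

text \<open>The law of cosines in the triangle of the three centres.\<close>

lemma angle_sym_eq_angle:
  assumes "centre D - centre C = of_real (radius C + radius D) * cis a"
    "centre E - centre C = of_real (radius C + radius E) * cis b"
    "tangent D E" "radius C > 0" "radius D > 0" "radius E > 0" "0 \<le> b - a" "b - a \<le> pi"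
  shows "angle_sym (radius C) (radius D) (radius E) = b - a"
proof -
  define R1 where "R1 = radius C + radius D"
  define R2 where "R2 = radius C + radius E"
  have "centre D - centre E = of_real R1 * cis a - of_real R2 * cis b"
    using assms(1,2) unfolding R1_def R2_def by (simp add: algebra_simps)
  hence "(radius D + radius E)^2 = R1^2 + R2^2 - 2 * R1 * R2 * cos (b - a)"
    using assms(3) norm_cis_diff_square unfolding tangent_iff_norm by metis
  moreover have "R1 > 0" "R2 > 0" using assms unfolding R1_def R2_def by auto
  ultimately have "cos (b - a) = (R1^2 + R2^2 - (radius D + radius E)^2) / (2 * R1 * R2)"
    by (simp add: field_simps)
  hence "angle_sym (radius C) (radius D) (radius E) = arccos (cos (b - a))"
    unfolding angle_sym_def R1_def R2_def by simp
  also have "\<dots> = b - a" using assms(7,8) by (simp add: arccos_cos)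
  finally show ?thesis .
qed

lemma ccw_around_angle_sum:
  assumes "ccw_around C qs" "radius C > 0" "\<forall>D\<in>set qs. radius D > 0"
    "\<forall>i<length qs. tangent (qs!i) (qs!(Suc i mod length qs))"
  shows "cyclic_sum (\<lambda>D E. angle_sym (radius C) (radius D) (radius E)) qs = 2 * pi"
proof -
  define m where "m = length qs"
  obtain \<theta> where m: "m > 0"
    and th: "\<And>i. i < m \<Longrightarrow> centre (qs!i) - centre C = of_real (radius C + radius (qs!i)) * cis (\<theta> i)"
    and thn: "\<And>k. k < m \<Longrightarrow> centre (qs!(Suc k mod m)) - centre C
       = of_real (radius C + radius (qs!(Suc k mod m))) * cis (next_angle \<theta> m k)"
    and gap: "\<And>k. k < m \<Longrightarrow> 0 < next_angle \<theta> m k - \<theta> k"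
      "\<And>k. k < m \<Longrightarrow> next_angle \<theta> m k - \<theta> k < pi"
    using ccw_around_angles[OF assms(1), folded m_def] by blast
  have "angle_sym (radius C) (radius (qs!i)) (radius (qs!(Suc i mod m))) = next_angle \<theta> m i - \<theta> i"
    if i: "i < m" for i
  proof (rule angle_sym_eq_angle[OF th[OF i] thn[OF i]])
    show "tangent (qs!i) (qs!(Suc i mod m))" using assms(4) i unfolding m_def by simp
    have "Suc i mod m < m" using m by simp
    thus "radius (qs!i) > 0" "radius (qs!(Suc i mod m)) > 0" using assms(3) i unfolding m_def by auto
  qed (use assms(2) gap[OF i] in auto)
  hence "cyclic_sum (\<lambda>D E. angle_sym (radius C) (radius D) (radius E)) qs = (\<Sum>i<m. next_angle \<theta> m i - \<theta> i)"
    unfolding cyclic_sum_def m_def[symmetric] by simp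
  also have "\<dots> = 2 * pi" using m by (rule sum_next_angle_gaps)
  finally show ?thesis .
qed

lemma corona_ccw:
  assumes "corona C ps"
  obtains qs where "qs = ps \<or> qs = rev ps" "ccw_around C qs"
    "\<forall>i<length qs. tangent (qs!i) (qs!(Suc i mod length qs))"
proof -
  have t: "\<forall>i<length ps. tangent (ps!i) (ps!(Suc i mod length ps))"
    using assms unfolding corona_def by simp
  moreover have "\<forall>i<length (rev ps). tangent (rev ps!i) (rev ps!(Suc i mod length (rev ps)))"
  proof (intro allI impI)
    fix i assume i: "i < length (rev ps)"
    define j where "j = length ps - 1 - Suc i mod length ps"
    have "j < length ps" using i unfolding j_def by simp
    thus "tangent (rev ps!i) (rev ps!(Suc i mod length (rev ps)))"
      using t nth_rev_cyclic_pair[of i ps] i tangent_sym unfolding j_def[symmetric] by simp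
  qed
  moreover have "ccw_around C ps \<or> ccw_around C (rev ps)"
    using assms unfolding corona_def around_def by simp
  ultimately show ?thesis using that by blast
qed

lemma corona_angle_sum:
  assumes "corona C ps"
  shows "cyclic_sum (\<lambda>D E. angle_sym (radius C) (radius D) (radius E)) ps = 2 * pi"
proof -
  obtain qs where qs: "qs = ps \<or> qs = rev ps" "ccw_around C qs"
    "\<forall>i<length qs. tangent (qs!i) (qs!(Suc i mod length qs))"
    using assms by (rule corona_ccw)
  have "radius C > 0" "\<forall>D\<in>set qs. radius D > 0"
    using assms qs(1) unfolding corona_def is_disc_def by auto
  hence "cyclic_sum (\<lambda>D E. angle_sym (radius C) (radius D) (radius E)) qs = 2 * pi"
    using ccw_around_angle_sum qs(2,3) by blast
  thus ?thesis
    using qs(1) cyclic_sum_rev[of "\<lambda>D E. angle_sym (radius C) (radius D) (radius E)" ps] angle_sym_commute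
    by auto
qed

lemma code_class_self: "x \<in> code_class x"
  unfolding code_class_def code_equiv_def by (auto intro: exI[of _ 0])

lemma angle_sum_code_class:
  assumes "y \<in> code_class x"
  shows "angle_sum \<tau> y = angle_sum \<tau> x"
proof -
  obtain k where "fst y = fst x" "snd y = rotate k (snd x) \<or> snd y = rev (rotate k (snd x))"
    using assms unfolding code_class_def code_equiv_def by auto
  thus ?thesis
    by (cases x, cases y) (auto simp: angle_sum_eq_cyclic_sum cyclic_sum_rotate cyclic_sum_rev angle_sym_commute)
qed

lemma tightly_realizes_code_class:
  "tightly_realizes_code \<tau> (code_class x) \<longleftrightarrow> angle_sum \<tau> x = 2 * pi"
  unfolding tightly_realizes_code_def using angle_sum_code_class code_class_self by metis

subsection \<open>Monotonicity of the angle symbol\<close>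

lemma angle_sym_eq_arccos:
  assumes "c > 0" "a > 0" "b > 0"
  shows "angle_sym c a b = arccos (1 - 2 * (a / (c + a)) * (b / (c + b)))"
proof -
  have num: "(c + a)^2 + (c + b)^2 - (a + b)^2 = 2 * (c + a) * (c + b) - 4 * a * b"
    by (simp add: power2_eq_square algebra_simps)
  have "(2 * p * q - 4 * a * b) / (2 * p * q) = 1 - 2 * (a / p) * (b / q)" if "p > 0" "q > 0" for p q
    using that by (simp add: field_simps)
  hence "((c + a)^2 + (c + b)^2 - (a + b)^2) / (2 * (c + a) * (c + b)) = 1 - 2 * (a / (c + a)) * (b / (c + b))"
    unfolding num using assms by (metis add_pos_pos)
  thus ?thesis unfolding angle_sym_def by simp
qed

lemma angle_sym_scale:
  assumes "k > 0" "c > 0" "a > 0" "b > 0"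
  shows "angle_sym (k * c) (k * a) (k * b) = angle_sym c a b"
proof -
  have "k * a / (k * c + k * a) = a / (c + a)" "k * b / (k * c + k * b) = b / (c + b)"
    using assms by (simp_all add: distrib_left[symmetric])
  thus ?thesis using assms by (simp add: angle_sym_eq_arccos)
qed

lemma ratio_to_sum_mono:
  fixes a a' c :: real
  assumes "c > 0" "0 < a" "a \<le> a'"
  shows "a / (c + a) \<le> a' / (c + a')" and "a < a' \<Longrightarrow> a / (c + a) < a' / (c + a')"
  using assms by (simp_all add: divide_simps algebra_simps mult_left_mono mult_strict_left_mono)

lemma angle_sym_mono:
  assumes "c > 0" "0 < a" "a \<le> a'" "0 < b" "b \<le> b'"
  shows "angle_sym c a b \<le> angle_sym c a' b'"
    and "a < a' \<Longrightarrow> angle_sym c a b < angle_sym c a' b'"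
proof -
  define x x' y y' where "x = a / (c + a)" "x' = a' / (c + a')" "y = b / (c + b)" "y' = b' / (c + b')"
  have bounds: "0 < x" "x' < 1" "0 < y" "y' < 1" using assms unfolding x_x'_y_y'_def by simp_all
  have le: "x \<le> x'" "y \<le> y'" using ratio_to_sum_mono(1) assms unfolding x_x'_y_y'_def by auto
  have eq: "angle_sym c a b = arccos (1 - 2 * x * y)" "angle_sym c a' b' = arccos (1 - 2 * x' * y')"
    using assms by (simp_all add: angle_sym_eq_arccos x_x'_y_y'_def)
  have "x' * y' \<le> 1" using bounds le by (intro mult_le_one) auto
  hence range: "-1 \<le> 1 - 2 * x' * y'" "1 - 2 * x * y \<le> 1" using bounds by simp_all
  have "x * y \<le> x' * y'" using bounds le by (intro mult_mono) auto
  thus "angle_sym c a b \<le> angle_sym c a' b'" unfolding eq using range by (intro arccos_le_arccos) auto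
  assume "a < a'"
  hence "x < x'" using ratio_to_sum_mono(2) assms unfolding x_x'_y_y'_def by blast
  hence "x * y < x' * y'" using bounds le by (intro mult_less_le_imp_less) auto
  thus "angle_sym c a b < angle_sym c a' b'" unfolding eq using range by (intro arccos_less_arccos) auto
qed

lemma cyclic_sum_angle_sym_rigid:
  assumes "c > 0" "\<forall>x\<in>set l. 0 < \<sigma> x \<and> \<sigma> x \<le> \<tau> x"
    "cyclic_sum (\<lambda>a b. angle_sym c (\<sigma> a) (\<sigma> b)) l
       = cyclic_sum (\<lambda>a b. angle_sym c (\<tau> a) (\<tau> b)) l"
  shows "\<forall>x\<in>set l. \<sigma> x = \<tau> x"
proof (rule ccontr)
  assume "\<not> ?thesis"
  then obtain i where i: "i < length l" "\<sigma> (l!i) \<noteq> \<tau> (l!i)" by (metis in_set_conv_nth)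
  define m where "m = length l"
  define S where "S \<rho> j = angle_sym c (\<rho> (l!j)) (\<rho> (l!(Suc j mod m)))" for \<rho> j
  have mem: "l!j \<in> set l" "l!(Suc j mod m) \<in> set l" if "j < m" for j
    using that m_def by (auto intro!: nth_mem mod_less_divisor)
  have "S \<sigma> j \<le> S \<tau> j" if "j \<in> {..<m}" for j
    unfolding S_def using that mem[of j] assms(1,2) by (intro angle_sym_mono(1)) auto
  moreover have "S \<sigma> i < S \<tau> i"
    unfolding S_def using i mem[of i] assms(1,2) m_def
    by (intro angle_sym_mono(2)) (auto simp: order.strict_iff_order)
  ultimately have "sum (S \<sigma>) {..<m} < sum (S \<tau>) {..<m}"
    using i m_def by (intro sum_strict_mono_ex1) auto
  thus False using assms(3) unfolding cyclic_sum_def S_def m_def by simp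
qed

lemma angle_sum_scale:
  assumes "k > 0" "\<forall>x\<in>insert c (set l). \<tau> x > 0"
  shows "angle_sum (\<lambda>i. k * \<tau> i) (c, l) = angle_sum \<tau> (c, l)"
  unfolding angle_sum_eq_cyclic_sum cyclic_sum_def
  using assms by (intro sum.cong refl angle_sym_scale) (auto intro!: nth_mem mod_less_divisor)

lemma angle_sum_max_ratio:
  assumes "\<forall>x\<in>insert c (set l). \<sigma> x > 0 \<and> \<tau> x > 0"
    "\<forall>x\<in>set l. \<sigma> x / \<tau> x \<le> \<sigma> c / \<tau> c"
    "angle_sum \<sigma> (c, l) = angle_sum \<tau> (c, l)"
  shows "\<forall>x\<in>set l. \<sigma> x / \<tau> x = \<sigma> c / \<tau> c"
proof -
  define k where "k = \<sigma> c / \<tau> c"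
  have k: "k > 0" using assms(1) by (simp add: k_def)
  define \<tau>' where "\<tau>' = (\<lambda>x. k * \<tau> x)"
  have "\<tau>' c = \<sigma> c" using assms(1) by (simp add: \<tau>'_def k_def)
  have "angle_sum \<sigma> (c, l) = angle_sum \<tau>' (c, l)"
    using assms(3) angle_sum_scale[OF k, of c l \<tau>] assms(1) by (simp add: \<tau>'_def)
  hence "cyclic_sum (\<lambda>a b. angle_sym (\<sigma> c) (\<sigma> a) (\<sigma> b)) l
      = cyclic_sum (\<lambda>a b. angle_sym (\<sigma> c) (\<tau>' a) (\<tau>' b)) l"
    unfolding angle_sum_eq_cyclic_sum \<open>\<tau>' c = \<sigma> c\<close> .
  moreover have "\<forall>x\<in>set l. 0 < \<sigma> x \<and> \<sigma> x \<le> \<tau>' x"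
    using assms(1,2) by (auto simp: \<tau>'_def k_def field_simps)
  ultimately have "\<forall>x\<in>set l. \<sigma> x = \<tau>' x"
    using assms(1) by (intro cyclic_sum_angle_sym_rigid) auto
  thus ?thesis using assms(1) by (auto simp: \<tau>'_def k_def)
qed

subsection \<open>Subfamilies closed under taking coronas\<close>

definition corona_closed :: "disc set \<Rightarrow> bool" where
  "corona_closed Q \<longleftrightarrow> (\<forall>C\<in>Q. \<exists>ps. set ps \<subseteq> Q \<and> corona C ps)"

lemma corona_petals_tangent:
  assumes "corona C ps" "D \<in> set ps"
  shows "tangent C D"
  using assms unfolding corona_def by (metis in_set_conv_nth tangent_sym)

text \<open>The segment between the centres of two tangent discs is covered by the two discs, while
  the edges of the triangle meet no disc of the packing other than \<open>X\<close>, \<open>Y\<close>, \<open>Z\<close>.\<close>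

lemma tangent_disc_stays_in_triangle:
  assumes "disjoint_interiors P" "\<forall>D\<in>P. radius D > 0" "X \<in> P" "Y \<in> P" "Z \<in> P"
    "tangent X Y" "tangent Y Z" "tangent Z X"
    "E \<in> P" "E' \<in> P" "E \<notin> {X, Y, Z}" "E' \<notin> {X, Y, Z}" "tangent E E'"
    "centre E \<in> convex hull {centre X, centre Y, centre Z}"
  shows "centre E' \<in> convex hull {centre X, centre Y, centre Z}"
proof (rule ccontr)
  define T where "T = convex hull {centre X, centre Y, centre Z}"
  assume "centre E' \<notin> convex hull {centre X, centre Y, centre Z}"
  hence "closed_segment (centre E) (centre E') \<inter> frontier T \<noteq> {}"
    using assms(14) by (intro connected_Int_frontier) (auto simp: T_def)
  then obtain q where q: "q \<in> closed_segment (centre E) (centre E')" "q \<in> frontier T" by blast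
  have "cmod (q - centre E) \<le> radius E \<or> cmod (q - centre E') \<le> radius E'"
    using segment_of_tangent_discs_covered[OF _ q(1)] assms(2,9,10,13)
    by (simp add: tangent_iff_norm less_imp_le)
  then obtain W where W: "W \<in> P" "W \<notin> {X, Y, Z}" "cmod (centre W - q) \<le> radius W"
    using assms(9-12) by (metis norm_minus_commute)
  have "frontier T = closed_segment (centre X) (centre Y) \<union> closed_segment (centre Y) (centre Z)
      \<union> closed_segment (centre Z) (centre X)"
    unfolding T_def by (rule frontier_of_triangle) simp
  hence "q \<in> closed_segment (centre X) (centre Y) \<or> q \<in> closed_segment (centre Y) (centre Z)
      \<or> q \<in> closed_segment (centre Z) (centre X)"
    using q(2) by blast
  hence "cmod (centre W - q) > radius W"
    using packing_segment_outside_disc[OF assms(1,2) _ _ W(1)] W(2) assms(3-8) by blast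
  thus False using W(3) by simp
qed

lemma corona_closed_avoids_triangle:
  assumes "disjoint_interiors P" "r0 > 0" "\<forall>D\<in>P. radius D \<ge> r0" "X \<in> P" "Y \<in> P" "Z \<in> P"
    "tangent X Y" "tangent Y Z" "tangent Z X"
    "Q \<subseteq> P" "corona_closed Q" "Q \<inter> {X, Y, Z} = {}"
  shows "\<forall>D\<in>Q. centre D \<notin> convex hull {centre X, centre Y, centre Z}"
proof -
  define T where "T = convex hull {centre X, centre Y, centre Z}"
  define F where "F = {E\<in>Q. centre E \<in> T}"
  have pos: "\<forall>D\<in>P. radius D > 0" using assms(2,3) by (meson less_le_trans)
  have "bounded T" unfolding T_def by (intro finite_imp_bounded_convex_hull) simp
  then obtain M where "\<forall>x\<in>T. cmod x \<le> M" unfolding bounded_iff by blast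
  hence "F \<subseteq> {D\<in>P. cmod (centre D - 0) \<le> M}" using assms(10) unfolding F_def by auto
  hence "finite F" using finite_discs_near[OF assms(1-3)] finite_subset by blast
  moreover have "\<forall>E\<in>F. \<exists>qs. set qs \<subseteq> F \<and> ccw_around E qs"
  proof
    fix E assume E: "E \<in> F"
    obtain ps where ps: "set ps \<subseteq> Q" "corona E ps"
      using assms(11) E unfolding corona_closed_def F_def by blast
    obtain qs where qs: "qs = ps \<or> qs = rev ps" "ccw_around E qs"
      using ps(2) by (rule corona_ccw)
    have "centre D \<in> T" if "D \<in> set ps" for D
      using tangent_disc_stays_in_triangle[OF assms(1) pos assms(4-9), of E D] E ps that assms(10,12)
        corona_petals_tangent[OF ps(2)] unfolding F_def T_def by blast
    hence "set qs \<subseteq> F" using qs(1) ps(1) unfolding F_def by auto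
    thus "\<exists>qs. set qs \<subseteq> F \<and> ccw_around E qs" using qs(2) by blast
  qed
  ultimately have "F = {}" using pos assms(10) unfolding F_def by (intro finite_ccw_closed_family_empty) auto
  thus ?thesis unfolding F_def T_def by blast
qed

lemma nearest_disc_exists:
  assumes "disjoint_interiors P" "r0 > 0" "\<forall>D\<in>P. r0 \<le> radius D" "\<forall>D\<in>P. radius D \<le> R"
    "Q \<subseteq> P" "Q \<noteq> {}"
  obtains A where "A \<in> Q" "\<forall>D\<in>Q. cmod (centre A - b) - radius A \<le> cmod (centre D - b) - radius D"
proof -
  define gap where "gap D = cmod (centre D - b) - radius D" for D
  obtain A0 where A0: "A0 \<in> Q" using assms(6) by blast
  define S where "S = {D\<in>Q. gap D \<le> gap A0}"
  have "S \<subseteq> {D\<in>P. cmod (centre D - b) \<le> gap A0 + R}"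
    using assms(4,5) unfolding S_def gap_def by force
  hence "finite S" using finite_discs_near[OF assms(1-3)] finite_subset by blast
  moreover have "S \<noteq> {}" using A0 unfolding S_def by blast
  ultimately have A: "arg_min_on gap S \<in> S" "\<forall>D\<in>S. gap (arg_min_on gap S) \<le> gap D"
    using arg_min_if_finite[of S gap] by (auto simp: not_less)
  hence "\<forall>D\<in>Q. gap (arg_min_on gap S) \<le> gap D" unfolding S_def by force
  thus ?thesis using that A(1) unfolding S_def gap_def by blast
qed

lemma closer_disc_beyond_petals:
  assumes "disjoint_interiors P" "\<forall>D\<in>P. radius D > 0" "A \<in> P" "X \<in> P" "Y \<in> P"
    "A \<noteq> X" "A \<noteq> Y" "tangent X Y"
    "s \<ge> 0" "t \<ge> 0" "s + t > 1" "b - centre A = of_real s * (centre X - centre A) + of_real t * (centre Y - centre A)"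
  shows "\<exists>W\<in>{X, Y}. cmod (centre W - b) - radius W < cmod (centre A - b) - radius A"
proof -
  define u where "u = s + t"
  have u: "u > 1" using assms(11) u_def by simp
  \<comment> \<open>where the segment from the centre of A to b crosses the segment of petal centres\<close>
  define p where "p = centre A + of_real (1 / u) * (b - centre A)"
  have "p = centre A + of_real (1 / u) * (of_real (u - t) * (centre X - centre A) + of_real t * (centre Y - centre A))"
    unfolding p_def assms(12) u_def by simp
  also have "\<dots> = of_real (1 - t / u) * centre X + of_real (t / u) * centre Y"
    using u by (simp add: complex_eq_iff field_simps)
  finally have "p = (1 - t / u) *\<^sub>R centre X + (t / u) *\<^sub>R centre Y" by (simp add: scaleR_conv_of_real)
  moreover have "0 \<le> t / u" "t / u \<le> 1" using u assms(9,10) u_def by auto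
  ultimately have p: "p \<in> closed_segment (centre X) (centre Y)"
    unfolding closed_segment_def by blast
  have pa: "cmod (centre A - p) > radius A"
    using packing_segment_outside_disc[OF assms(1,2,4,5,3) _ _ assms(8) p] assms(6,7) by blast
  have "p - centre A = of_real (1 / u) * (b - centre A)" "b - p = of_real (1 - 1 / u) * (b - centre A)"
    unfolding p_def by (simp_all add: algebra_simps)
  hence "cmod (p - centre A) = 1 / u * cmod (b - centre A)" "cmod (b - p) = (1 - 1 / u) * cmod (b - centre A)"
    using u by (simp_all only: norm_mult norm_of_real) simp_all
  hence bp: "cmod (b - p) = cmod (b - centre A) - cmod (p - centre A)" by (simp add: algebra_simps)
  have "cmod (p - centre X) \<le> radius X \<or> cmod (p - centre Y) \<le> radius Y"
    using segment_of_tangent_discs_covered[OF _ p] assms(2,4,5,8) by (simp add: tangent_iff_norm less_imp_le)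
  then obtain W where W: "W \<in> {X, Y}" "cmod (p - centre W) \<le> radius W" by blast
  have "cmod (centre W - b) - radius W \<le> cmod (centre W - p) + cmod (p - b) - radius W"
    using norm_triangle_ineq[of "centre W - p" "p - b"] by simp
  also have "\<dots> \<le> cmod (b - p)" using W(2) by (simp add: norm_minus_commute)
  also have "\<dots> < cmod (centre A - b) - radius A" using bp pa by (simp add: norm_minus_commute)
  finally show ?thesis using W(1) by blast
qed

lemma corona_closed_disjoint_empty:
  assumes "disjoint_interiors P" "r0 > 0" "\<forall>D\<in>P. r0 \<le> radius D" "\<forall>D\<in>P. radius D \<le> R"
    "Q \<subseteq> P" "Q' \<subseteq> P" "Q \<inter> Q' = {}" "corona_closed Q" "corona_closed Q'" "Q' \<noteq> {}"
  shows "Q = {}"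
proof (rule ccontr)
  assume "Q \<noteq> {}"
  have pos: "\<forall>D\<in>P. radius D > 0" using assms(2,3) by (meson less_le_trans)
  obtain B where B: "B \<in> Q'" using assms(10) by blast
  obtain A where A: "A \<in> Q"
    and nearest: "\<forall>D\<in>Q. cmod (centre A - centre B) - radius A \<le> cmod (centre D - centre B) - radius D"
    using nearest_disc_exists[OF assms(1-5) \<open>Q \<noteq> {}\<close>] by blast
  obtain ps where ps: "set ps \<subseteq> Q" "corona A ps" using assms(8) A unfolding corona_closed_def by blast
  obtain qs where qs: "qs = ps \<or> qs = rev ps" "ccw_around A qs"
    "\<forall>i<length qs. tangent (qs!i) (qs!(Suc i mod length qs))"
    using ps(2) by (rule corona_ccw)
  have qsQ: "set qs \<subseteq> Q" using qs(1) ps(1) by auto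
  obtain k s t where k: "k < length qs" "s \<ge> 0" "t \<ge> 0"
    "centre B - centre A = of_real s * (centre (qs!k) - centre A) + of_real t * (centre (qs!(Suc k mod length qs)) - centre A)"
    using ccw_around_cone[OF qs(2)] pos A qsQ assms(5) by (metis subset_iff)
  define X where "X = qs!k"
  define Y where "Y = qs!(Suc k mod length qs)"
  have "Suc k mod length qs < length qs" using k(1) by (intro mod_less_divisor) linarith
  hence XY: "X \<in> set qs" "Y \<in> set qs" using k(1) unfolding X_def Y_def by simp_all
  hence inQ: "X \<in> Q" "Y \<in> Q" using qsQ by auto
  have "A \<notin> set qs" using ps(2) qs(1) unfolding corona_def by auto
  hence "A \<noteq> X" "A \<noteq> Y" using XY by auto
  have "tangent X Y" using qs(3) k(1) unfolding X_def Y_def by simp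
  show False
  proof (cases "s + t > 1")
    case True
    then obtain W where "W \<in> {X, Y}"
      "cmod (centre W - centre B) - radius W < cmod (centre A - centre B) - radius A"
      using closer_disc_beyond_petals[OF assms(1) pos _ _ _ \<open>A \<noteq> X\<close> \<open>A \<noteq> Y\<close> \<open>tangent X Y\<close> k(2,3)]
        k(4) A inQ assms(5) unfolding X_def Y_def by blast
    thus False using nearest inQ by fastforce
  next
    case False
    hence "centre B \<in> convex hull {centre A, centre X, centre Y}"
      using k(2-4) unfolding convex_hull_3_alt X_def Y_def
      by (intro CollectI exI[of _ s] exI[of _ t]) (auto simp: scaleR_conv_of_real algebra_simps)
    moreover have "X \<in> set ps" "Y \<in> set ps" using XY qs(1) by auto
    hence "tangent A X" "tangent Y A" using corona_petals_tangent[OF ps(2)] tangent_sym by blast+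
    ultimately show False
      using corona_closed_avoids_triangle[OF assms(1-3) _ _ _ _ \<open>tangent X Y\<close> _ assms(6,9)] B
        A inQ assms(5,7) by blast
  qed
qed

lemma compact_packing_radius_bounds:
  assumes "compact_packing P" "finite (radii P)"
  obtains r0 R where "r0 > 0" "\<forall>D\<in>P. r0 \<le> radius D" "\<forall>D\<in>P. radius D \<le> R"
proof (cases "P = {}")
  case False
  have "\<forall>D\<in>P. radius D > 0" using assms(1) unfolding compact_packing_def is_disc_def by simp
  hence "Min (radii P) > 0" using assms(2) False unfolding radii_def by simp
  moreover have "\<forall>D\<in>P. Min (radii P) \<le> radius D \<and> radius D \<le> Max (radii P)"
    using assms(2) unfolding radii_def by simp
  ultimately show ?thesis using that by blast
qed (use that[of 1] in auto)

lemma coronas_exist: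
  assumes "compact_packing P" "finite (radii P)" "C \<in> P"
  obtains ps where "(C, ps) \<in> coronas P"
proof -
  obtain r0 R where r: "r0 > 0" "\<forall>D\<in>P. r0 \<le> radius D" "\<forall>D\<in>P. radius D \<le> R"
    using assms(1,2) by (rule compact_packing_radius_bounds)
  have dis: "disjoint_interiors P" using assms(1) unfolding compact_packing_def by simp
  define F where "F = {set qs | qs. set qs \<subseteq> P \<and> corona C qs}"
  have "F \<subseteq> Pow {D\<in>P. cmod (centre D - centre C) \<le> radius C + R}"
    using r(3) corona_petals_tangent unfolding F_def by (fastforce simp: tangent_iff_norm norm_minus_commute)
  hence "finite F" using finite_discs_near[OF dis r(1,2)] by (meson finite_Pow_iff finite_subset)
  moreover have "F \<noteq> {}" using assms(1,3) unfolding compact_packing_def F_def by blast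
  \<comment> \<open>a corona whose petal set has maximal cardinality is inclusion-maximal\<close>
  ultimately obtain X where X: "X \<in> F" "\<forall>Y\<in>F. card Y \<le> card X"
    using arg_min_if_finite[of F "\<lambda>Y. - int (card Y)"] by (auto simp: not_less)
  then obtain qs where qs: "X = set qs" "set qs \<subseteq> P" "corona C qs" unfolding F_def by blast
  have "\<not> (\<exists>rs. set rs \<subseteq> P \<and> corona C rs \<and> set qs \<subset> set rs)"
  proof
    assume "\<exists>rs. set rs \<subseteq> P \<and> corona C rs \<and> set qs \<subset> set rs"
    then obtain rs where rs: "set rs \<subseteq> P" "corona C rs" "set qs \<subset> set rs" by blast
    hence "card (set rs) \<le> card X" using X(2) unfolding F_def by blast
    moreover have "card (set qs) < card (set rs)" using rs(3) by (simp add: psubset_card_mono)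
    ultimately show False using qs(1) by simp
  qed
  thus ?thesis using that qs(2,3) assms(3) unfolding coronas_def by blast
qed

lemma compact_packing_corona_closed_meet:
  assumes "compact_packing P" "finite (radii P)" "Q \<subseteq> P" "Q' \<subseteq> P"
    "corona_closed Q" "corona_closed Q'" "Q \<noteq> {}" "Q' \<noteq> {}"
  shows "Q \<inter> Q' \<noteq> {}"
proof -
  obtain r0 R where "r0 > 0" "\<forall>D\<in>P. r0 \<le> radius D" "\<forall>D\<in>P. radius D \<le> R"
    using assms(1,2) by (rule compact_packing_radius_bounds)
  moreover have "disjoint_interiors P" using assms(1) unfolding compact_packing_def by simp
  ultimately show ?thesis using corona_closed_disjoint_empty assms(3-8) by blast
qed

subsection \<open>The canonical labeling\<close>

lemma sorted_list_of_set_last: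
  fixes A :: "'a::linorder set"
  assumes "finite A" "A \<noteq> {}"
  shows "sorted_list_of_set A ! (card A - 1) = Max A"
proof -
  define xs where "xs = sorted_list_of_set A"
  have xs: "length xs = card A" "set xs = A" "sorted xs" using assms(1) by (simp_all add: xs_def)
  have last: "card A - 1 < card A" using assms by (simp add: card_gt_0_iff)
  show ?thesis unfolding xs_def[symmetric]
  proof (rule Max_eqI[symmetric, OF assms(1)])
    fix x assume "x \<in> A"
    then obtain j where "j < card A" "xs ! j = x" using xs by (auto simp: in_set_conv_nth)
    thus "x \<le> xs ! (card A - 1)" using sorted_nth_mono[OF xs(3), of j "card A - 1"] xs(1) by simp
  qed (use last xs in auto)
qed

lemma label_canonical:
  assumes "finite (radii P)" "D \<in> P"
  shows "label P D < card (radii P)" and "canonical_realizer P (label P D) = radius D"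
proof -
  define xs where "xs = sorted_list_of_set (radii P)"
  have xs: "length xs = card (radii P)" "set xs = radii P" "distinct xs"
    using assms(1) by (simp_all add: xs_def)
  have "radius D \<in> set xs" using xs(2) assms(2) unfolding radii_def by simp
  then obtain i where i: "i < card (radii P)" "xs ! i = radius D" using xs(1) by (auto simp: in_set_conv_nth)
  have "label P D = i" unfolding label_def xs_def[symmetric]
  proof (rule the_equality)
    fix j assume "j < card (radii P) \<and> xs ! j = radius D"
    thus "j = i" using i xs(1) nth_eq_iff_index_eq[OF xs(3)] by metis
  qed (use i in simp)
  thus "label P D < card (radii P)" "canonical_realizer P (label P D) = radius D"
    using i by (simp_all add: canonical_realizer_def xs_def)
qed

lemma label_surj:
  assumes "finite (radii P)" "i < card (radii P)"
  obtains D where "D \<in> P" "label P D = i"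
proof -
  define xs where "xs = sorted_list_of_set (radii P)"
  have xs: "length xs = card (radii P)" "set xs = radii P" "distinct xs"
    using assms(1) by (simp_all add: xs_def)
  have "xs ! i \<in> radii P" using xs assms(2) by (metis nth_mem)
  then obtain D where D: "D \<in> P" "radius D = xs ! i" unfolding radii_def by auto
  have "xs ! label P D = xs ! i"
    using label_canonical[OF assms(1) D(1)] D(2) by (simp add: canonical_realizer_def xs_def)
  hence "label P D = i"
    using label_canonical(1)[OF assms(1) D(1)] assms(2) xs by (simp add: nth_eq_iff_index_eq)
  thus ?thesis using that D(1) by blast
qed

lemma canonical_realizer_PiE:
  assumes "compact_packing P" "finite (radii P)"
  shows "canonical_realizer P \<in> {0..<card (radii P)} \<rightarrow>\<^sub>E {0<..}"
proof -
  have "canonical_realizer P i > 0" if i: "i < card (radii P)" for i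
  proof -
    obtain D where "D \<in> P" "label P D = i" using label_surj[OF assms(2) i] by blast
    thus ?thesis using label_canonical(2)[OF assms(2)] assms(1)
      unfolding compact_packing_def is_disc_def by metis
  qed
  thus ?thesis by (simp add: canonical_realizer_def)
qed

lemma canonical_realizer_last:
  assumes "finite (radii P)" "radii P \<noteq> {}"
  shows "canonical_realizer P (card (radii P) - 1) = Max (radii P)"
  using assms sorted_list_of_set_last[OF assms] by (simp add: canonical_realizer_def card_gt_0_iff)

lemma cyclic_sum_cong:
  assumes "\<And>x y. x \<in> set xs \<Longrightarrow> y \<in> set xs \<Longrightarrow> g x y = h x y"
  shows "cyclic_sum g xs = cyclic_sum h xs"
proof -
  have "g (xs!i) (xs!(Suc i mod length xs)) = h (xs!i) (xs!(Suc i mod length xs))" if "i < length xs" for i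
  proof -
    have "Suc i mod length xs < length xs" using that by (intro mod_less_divisor) linarith
    thus ?thesis using that by (simp add: assms)
  qed
  thus ?thesis unfolding cyclic_sum_def by simp
qed

lemma tightly_realizes_coronas_iff:
  "tightly_realizes \<tau> (code_of P ` coronas P) \<longleftrightarrow>
     (\<forall>(C, ps)\<in>coronas P. angle_sum \<tau> (label P C, map (label P) ps) = 2 * pi)"
  unfolding tightly_realizes_def code_of_def by (auto simp: tightly_realizes_code_class)

lemma canonical_realizer_tightly_realizes:
  assumes "compact_packing P" "finite (radii P)"
  shows "tightly_realizes (canonical_realizer P) (code_of P ` coronas P)"
  unfolding tightly_realizes_coronas_iff
proof (clarify)
  fix C ps assume C: "(C, ps) \<in> coronas P"
  hence "C \<in> P" "set ps \<subseteq> P" "corona C ps" unfolding coronas_def by auto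
  hence "\<forall>D\<in>insert C (set ps). canonical_realizer P (label P D) = radius D"
    using label_canonical(2)[OF assms(2)] by blast
  hence "angle_sum (canonical_realizer P) (label P C, map (label P) ps)
      = cyclic_sum (\<lambda>D E. angle_sym (radius C) (radius D) (radius E)) ps"
    unfolding angle_sum_eq_cyclic_sum cyclic_sum_map by (intro cyclic_sum_cong) simp
  thus "angle_sum (canonical_realizer P) (label P C, map (label P) ps) = 2 * pi"
    using corona_angle_sum[OF \<open>corona C ps\<close>] by simp
qed

lemma max_ratio_discs_corona_closed:
  assumes "compact_packing P" "finite (radii P)"
    "\<forall>D\<in>P. \<sigma> (label P D) > 0 \<and> \<tau> (label P D) > 0"
    "tightly_realizes \<sigma> (code_of P ` coronas P)" "tightly_realizes \<tau> (code_of P ` coronas P)"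
    "\<forall>D\<in>P. \<sigma> (label P D) / \<tau> (label P D) \<le> L"
  shows "corona_closed {D\<in>P. \<sigma> (label P D) / \<tau> (label P D) = L}"
  unfolding corona_closed_def
proof
  fix C assume "C \<in> {D\<in>P. \<sigma> (label P D) / \<tau> (label P D) = L}"
  hence C: "C \<in> P" "\<sigma> (label P C) / \<tau> (label P C) = L" by auto
  obtain ps where ps: "(C, ps) \<in> coronas P" using assms(1,2) C(1) by (rule coronas_exist)
  hence "set ps \<subseteq> P" "corona C ps" unfolding coronas_def by auto
  moreover have "\<forall>x\<in>set (map (label P) ps). \<sigma> x / \<tau> x = \<sigma> (label P C) / \<tau> (label P C)"
  proof (rule angle_sum_max_ratio)
    show "angle_sum \<sigma> (label P C, map (label P) ps) = angle_sum \<tau> (label P C, map (label P) ps)"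
      using assms(4,5) ps unfolding tightly_realizes_coronas_iff by fastforce
  qed (use assms(3,6) C \<open>set ps \<subseteq> P\<close> in auto)
  ultimately show "\<exists>ps. set ps \<subseteq> {D\<in>P. \<sigma> (label P D) / \<tau> (label P D) = L} \<and> corona C ps"
    using C(2) by auto
qed

lemma tight_realizers_proportional:
  assumes "compact_packing P" "finite (radii P)" "n = card (radii P)"
    "\<sigma> \<in> {0..<n} \<rightarrow>\<^sub>E {0<..}" "\<tau> \<in> {0..<n} \<rightarrow>\<^sub>E {0<..}"
    "tightly_realizes \<sigma> (code_of P ` coronas P)" "tightly_realizes \<tau> (code_of P ` coronas P)"
  obtains k where "\<forall>i<n. \<sigma> i = k * \<tau> i"
proof (cases "n = 0")
  case False
  define f where "f i = \<sigma> i / \<tau> i" for i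
  define L where "L = Max (f ` {..<n})"
  define \<mu> where "\<mu> = Min (f ` {..<n})"
  have pos: "\<sigma> i > 0" "\<tau> i > 0" if "i < n" for i using assms(4,5) that by (auto simp: PiE_iff)
  have lab: "label P D < n" if "D \<in> P" for D using label_canonical(1)[OF assms(2) that] assms(3) by simp
  have bounds: "\<mu> \<le> f i" "f i \<le> L" if "i < n" for i using that by (simp_all add: L_def \<mu>_def)
  have "L \<in> f ` {..<n}" "\<mu> \<in> f ` {..<n}" using False unfolding L_def \<mu>_def by (auto intro!: Max_in Min_in)
  then obtain i j where ij: "i < n" "f i = L" "j < n" "f j = \<mu>" by auto
  have "\<mu> > 0" using ij(4) pos[OF ij(3)] unfolding f_def by (metis divide_pos_pos)
  define Q where "Q = {D\<in>P. \<sigma> (label P D) / \<tau> (label P D) = L}"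
  define Q' where "Q' = {D\<in>P. \<tau> (label P D) / \<sigma> (label P D) = 1 / \<mu>}"
  have "corona_closed Q" unfolding Q_def
    using assms(1,2,6,7) pos lab bounds(2) by (intro max_ratio_discs_corona_closed) (auto simp: f_def)
  moreover have "corona_closed Q'" unfolding Q'_def
  proof (intro max_ratio_discs_corona_closed)
    show "\<forall>D\<in>P. \<tau> (label P D) / \<sigma> (label P D) \<le> 1 / \<mu>"
      using pos lab bounds(1) \<open>\<mu> > 0\<close> by (auto simp: f_def field_simps)
  qed (use assms(1,2,6,7) pos lab in auto)
  moreover obtain Di where "Di \<in> P" "label P Di = i" using label_surj[OF assms(2)] ij(1) assms(3) by blast
  hence "Di \<in> Q" using ij(2) unfolding Q_def f_def by simp
  moreover obtain Dj where "Dj \<in> P" "label P Dj = j" using label_surj[OF assms(2)] ij(3) assms(3) by blast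
  hence "Dj \<in> Q'" using ij(4)[symmetric] unfolding Q'_def f_def by simp
  ultimately have "Q \<inter> Q' \<noteq> {}"
    using compact_packing_corona_closed_meet[OF assms(1,2), of Q Q'] unfolding Q_def Q'_def by blast
  then obtain D where D: "D \<in> P" "f (label P D) = L" "\<tau> (label P D) / \<sigma> (label P D) = 1 / \<mu>"
    unfolding Q_def Q'_def f_def by blast
  have "f (label P D) = \<mu>" using D(3) pos[OF lab[OF D(1)]] \<open>\<mu> > 0\<close> by (simp add: f_def field_simps)
  have "\<sigma> i = L * \<tau> i" if "i < n" for i
  proof -
    have "f i = L" using bounds[OF that] D(2) \<open>f (label P D) = \<mu>\<close> by simp
    thus ?thesis using pos[OF that] by (simp add: f_def field_simps)
  qed
  thus ?thesis using that by blast
qed (use that in simp)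

theorem theorem4p3:
  fixes n :: nat and P :: "disc set"
  assumes "n \<ge> 2"
    and "compact_packing P"
    and "card (radii P) = n"
    and "Max (radii P) = 1"
  shows "{\<tau> \<in> {0..<n} \<rightarrow>\<^sub>E {0<..}. \<tau> (n - 1) = 1 \<and> tightly_realizes \<tau> (code_of P ` coronas P)}
         = {canonical_realizer P}"
proof -
  have fin: "finite (radii P)" using assms(1,3) by (metis card.infinite not_numeral_le_zero)
  have ne: "radii P \<noteq> {}" using assms(1,3) by auto
  define \<rho> where "\<rho> = canonical_realizer P"
  have \<rho>: "\<rho> \<in> {0..<n} \<rightarrow>\<^sub>E {0<..}" "\<rho> (n - 1) = 1"
    "tightly_realizes \<rho> (code_of P ` coronas P)"
    using canonical_realizer_PiE[OF assms(2) fin] canonical_realizer_last[OF fin ne]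
      canonical_realizer_tightly_realizes[OF assms(2) fin]
    unfolding \<rho>_def assms(3,4) by simp_all
  have "\<tau> = \<rho>"
    if \<tau>: "\<tau> \<in> {0..<n} \<rightarrow>\<^sub>E {0<..}" "\<tau> (n - 1) = 1"
      "tightly_realizes \<tau> (code_of P ` coronas P)" for \<tau>
  proof -
    obtain k where k: "\<forall>i<n. \<tau> i = k * \<rho> i"
      using tight_realizers_proportional[OF assms(2) fin assms(3)[symmetric] \<tau>(1) \<rho>(1) \<tau>(3) \<rho>(3)] .
    moreover have "n - 1 < n" using assms(1) by simp
    ultimately have "k = 1" using \<tau>(2) \<rho>(2) by simp
    thus ?thesis using k \<tau>(1) \<rho>(1) by (intro PiE_ext[of \<tau> "{0..<n}" "\<lambda>_. {0<..}"]) auto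
  qed
  thus ?thesis using \<rho> unfolding \<rho>_def by blast
qed

end
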